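(* Let $X$ be a metric space, $(M,\rho)$ a complete metric space, and $(G_i)_{i\ge1}$ a sequence of homotopically dense $G_\delta$-subsets of $C(X,M)$. Then $\bigcap_{i\ge1}G_i$ is homotopically dense in $C(X,M)$.
   Context: $C(X,M)$ carries the source limitation topology: the neighborhood base at $f$ consists of the sets $\{g:\rho(g(x),f(x))<\varepsilon(x)\ \forall x\in X\}$, $\varepsilon\colon X\to(0,1]$ continuous. A set $U\subset C(X,M)$ is homotopically dense if for every $g\in C(X,M)$ and every continuous $\varepsilon\colon X\to(0,1]$ there is $g'\in U$ which is $\varepsilon$-homotopic to $g$, meaning there is a homotopy $h\colon X\times[0,1]\to M$ from $g$ to $g'$ with $\operatorname{diam}h(\{x\}\times[0,1])<\varepsilon(x)$ for all $x\in X$. *)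

theory Defs
  imports "HOL-Analysis.Analysis"
begin

text \<open>The space C(X,M) of continuous maps between (abstract) metric spaces (X,d) and (M,rho);
  maps are represented by HOL functions that are extensional on X (undefined off X).\<close>
definition CXM :: "'a set \<Rightarrow> ('a \<Rightarrow> 'a \<Rightarrow> real) \<Rightarrow> 'b set \<Rightarrow> ('b \<Rightarrow> 'b \<Rightarrow> real) \<Rightarrow> ('a \<Rightarrow> 'b) set" where
  "CXM X d M rho = {f. continuous_map (Metric_space.mtopology X d) (Metric_space.mtopology M rho) f
                        \<and> f \<in> extensional X}"

definition ctrl :: "'a set \<Rightarrow> ('a \<Rightarrow> 'a \<Rightarrow> real) \<Rightarrow> ('a \<Rightarrow> real) \<Rightarrow> bool" where
  "ctrl X d eps \<longleftrightarrow> continuous_map (Metric_space.mtopology X d) euclideanreal eps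
                     \<and> (\<forall>x\<in>X. 0 < eps x \<and> eps x \<le> 1)"

definition slnbhd :: "'a set \<Rightarrow> ('a \<Rightarrow> 'a \<Rightarrow> real) \<Rightarrow> 'b set \<Rightarrow> ('b \<Rightarrow> 'b \<Rightarrow> real)
                      \<Rightarrow> ('a \<Rightarrow> 'b) \<Rightarrow> ('a \<Rightarrow> real) \<Rightarrow> ('a \<Rightarrow> 'b) set" where
  "slnbhd X d M rho f eps = {g \<in> CXM X d M rho. \<forall>x\<in>X. rho (g x) (f x) < eps x}"

definition sl_open :: "'a set \<Rightarrow> ('a \<Rightarrow> 'a \<Rightarrow> real) \<Rightarrow> 'b set \<Rightarrow> ('b \<Rightarrow> 'b \<Rightarrow> real)
                      \<Rightarrow> ('a \<Rightarrow> 'b) set \<Rightarrow> bool" where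
  "sl_open X d M rho U \<longleftrightarrow> U \<subseteq> CXM X d M rho \<and>
     (\<forall>f\<in>U. \<exists>eps. ctrl X d eps \<and> slnbhd X d M rho f eps \<subseteq> U)"

lemma istopology_sl_open: "istopology (sl_open X d M rho)"
  unfolding istopology_def
proof (intro conjI allI impI)
  fix S T assume S: "sl_open X d M rho S" and T: "sl_open X d M rho T"
  show "sl_open X d M rho (S \<inter> T)"
    unfolding sl_open_def
  proof (intro conjI ballI)
    show "S \<inter> T \<subseteq> CXM X d M rho" using S unfolding sl_open_def by (simp add: le_infI1)
    fix f assume f: "f \<in> S \<inter> T"
    then obtain e1 e2 where e1: "ctrl X d e1" "slnbhd X d M rho f e1 \<subseteq> S"
      and e2: "ctrl X d e2" "slnbhd X d M rho f e2 \<subseteq> T"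
      using S T unfolding sl_open_def by (meson IntD1 IntD2)
    have "ctrl X d (\<lambda>x. min (e1 x) (e2 x))"
      using e1(1) e2(1) unfolding ctrl_def by (simp add: continuous_map_real_min min_le_iff_disj)
    moreover have "slnbhd X d M rho f (\<lambda>x. min (e1 x) (e2 x)) \<subseteq> S \<inter> T"
      using e1(2) e2(2) unfolding slnbhd_def by (auto simp: subset_iff)
    ultimately show "\<exists>eps. ctrl X d eps \<and> slnbhd X d M rho f eps \<subseteq> S \<inter> T" by blast
  qed
next
  fix K assume K: "\<forall>S\<in>K. sl_open X d M rho S"
  show "sl_open X d M rho (\<Union>K)"
    unfolding sl_open_def
  proof (intro conjI ballI)
    show "\<Union>K \<subseteq> CXM X d M rho" using K unfolding sl_open_def by (simp add: Sup_least)
    fix f assume "f \<in> \<Union>K"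
    then obtain S where "S \<in> K" "f \<in> S" by blast
    then show "\<exists>eps. ctrl X d eps \<and> slnbhd X d M rho f eps \<subseteq> \<Union>K"
      using K unfolding sl_open_def by (meson Union_upper order_trans)
  qed
qed

definition sl_topology :: "'a set \<Rightarrow> ('a \<Rightarrow> 'a \<Rightarrow> real) \<Rightarrow> 'b set \<Rightarrow> ('b \<Rightarrow> 'b \<Rightarrow> real)
                           \<Rightarrow> ('a \<Rightarrow> 'b) topology" where
  "sl_topology X d M rho = topology (sl_open X d M rho)"

definition mdiam :: "('b \<Rightarrow> 'b \<Rightarrow> real) \<Rightarrow> 'b set \<Rightarrow> real" where
  "mdiam rho S = Sup {rho a b | a b. a \<in> S \<and> b \<in> S}"

definition eps_homotopic :: "'a set \<Rightarrow> ('a \<Rightarrow> 'a \<Rightarrow> real) \<Rightarrow> 'b set \<Rightarrow> ('b \<Rightarrow> 'b \<Rightarrow> real)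
                             \<Rightarrow> ('a \<Rightarrow> real) \<Rightarrow> ('a \<Rightarrow> 'b) \<Rightarrow> ('a \<Rightarrow> 'b) \<Rightarrow> bool" where
  "eps_homotopic X d M rho eps g g' \<longleftrightarrow>
     (\<exists>h :: 'a \<times> real \<Rightarrow> 'b.
        continuous_map (prod_topology (Metric_space.mtopology X d) (top_of_set {0..1}))
                       (Metric_space.mtopology M rho) h
      \<and> (\<forall>x\<in>X. h (x, 0) = g x \<and> h (x, 1) = g' x)
      \<and> (\<forall>x\<in>X. mdiam rho (h ` ({x} \<times> {0..1})) < eps x))"

definition homotopically_dense :: "'a set \<Rightarrow> ('a \<Rightarrow> 'a \<Rightarrow> real) \<Rightarrow> 'b set \<Rightarrow> ('b \<Rightarrow> 'b \<Rightarrow> real)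
                                   \<Rightarrow> ('a \<Rightarrow> 'b) set \<Rightarrow> bool" where
  "homotopically_dense X d M rho U \<longleftrightarrow>
     (\<forall>g \<in> CXM X d M rho. \<forall>eps. ctrl X d eps \<longrightarrow>
        (\<exists>g' \<in> U. eps_homotopic X d M rho eps g g'))"

end

theory Submission
  imports Defs
begin

(*
  A G-delta set is a countable intersection of
  open sets, and an open set containing a homotopically dense set is again homotopically
  dense; so it suffices to show that a countable intersection of OPEN homotopically dense
  sets V_0, V_1, ... is homotopically dense.

  Given g and a control eps, we choose inductively maps f_0 = g, f_1, ... and controls
  e_0 = eps/5, e_1, ... such that f_(k+1) lies in V_k, is e_k-homotopic to f_k, e_(k+1)
  is at most e_k/2, and every map within 2 e_(k+1) of f_(k+1) still lies in V_k
  (an "admissible step").  Concatenating the homotopies h_k on the dyadic intervals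
  [1 - 2^-k, 1 - 2^-(k+1)] gives maps F_n : X x [0,1] -> M which are uniformly Cauchy,
  since F_(n+1) moves at most e_n away from F_n.  Completeness of M yields a continuous
  limit H, a homotopy from g to g' = H(-,1), whose tracks have diameter <= 4 e_0 < eps
  and whose end g' is within 2 e_(k+1) of f_(k+1), hence in every V_k.
*)

lemma sl_openin_iff: "openin (sl_topology X d M rho) U \<longleftrightarrow> sl_open X d M rho U"
  by (simp add: sl_topology_def istopology_sl_open)

lemma topspace_sl_topology: "topspace (sl_topology X d M rho) = CXM X d M rho"
proof -
  have "ctrl X d (\<lambda>x. 1)" by (simp add: ctrl_def)
  then have "sl_open X d M rho (CXM X d M rho)"
    unfolding sl_open_def slnbhd_def by blast
  then show ?thesis
    unfolding topspace_def sl_openin_iff by (auto simp: sl_open_def)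
qed

lemma homotopically_dense_mono:
  "A \<subseteq> B \<Longrightarrow> homotopically_dense X d M rho A \<Longrightarrow> homotopically_dense X d M rho B"
  unfolding homotopically_dense_def by blast

lemma gdelta_homotopically_dense_open_family:
  assumes gdelta: "\<And>i::nat. gdelta_in (sl_topology X d M rho) (G i)"
    and dense: "\<And>i. homotopically_dense X d M rho (G i)"
  obtains V :: "nat \<Rightarrow> ('a \<Rightarrow> 'b) set"
  where "\<And>k. sl_open X d M rho (V k)" "\<And>k. homotopically_dense X d M rho (V k)"
    and "(\<Inter>k. V k) \<subseteq> (\<Inter>i. G i)"
proof -
  let ?T = "sl_topology X d M rho"
  let ?C = "CXM X d M rho"
  have "\<exists>U. countable U \<and> U \<subseteq> Collect (openin ?T) \<and> \<Inter>U = G i" for i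
    using gdelta[of i] unfolding gdelta_in_alt intersection_of_def by blast
  then obtain U where U: "\<And>i. countable (U i)" "\<And>i. U i \<subseteq> Collect (openin ?T)"
    "\<And>i. \<Inter>(U i) = G i"
    by metis
  text \<open>The whole space is added so that the family is nonempty and can be enumerated.\<close>
  define W where "W = insert ?C (\<Union>i. U i)"
  have "countable W" "W \<noteq> {}" using U(1) by (auto simp: W_def)
  then have range_enum: "range (from_nat_into W) = W" by (simp add: range_from_nat_into)
  have G_sub: "G i \<subseteq> ?C" for i
    using gdelta_in_subset[OF gdelta[of i]] by (simp add: topspace_sl_topology)
  have "sl_open X d M rho S \<and> homotopically_dense X d M rho S" if "S \<in> W" for S
  proof -
    from that consider "S = ?C" | i where "S \<in> U i" by (auto simp: W_def)
    then show ?thesis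
    proof cases
      case 1
      then show ?thesis
        using openin_topspace[of ?T] homotopically_dense_mono[OF G_sub dense]
        by (simp add: sl_openin_iff topspace_sl_topology)
    next
      case (2 i)
      then have "homotopically_dense X d M rho S"
        using U(3)[of i] homotopically_dense_mono[OF _ dense[of i]] by blast
      then show ?thesis using U(2)[of i] 2 by (auto simp: sl_openin_iff)
    qed
  qed
  moreover have "(\<Inter>k. from_nat_into W k) \<subseteq> (\<Inter>i. G i)"
  proof -
    have "\<Inter>W \<subseteq> \<Inter>(U i)" for i by (rule Inter_anti_mono) (auto simp: W_def)
    then have "\<Inter>W \<subseteq> G i" for i using U(3) by blast
    then show ?thesis using range_enum by blast
  qed
  ultimately show thesis
    using that[of "from_nat_into W"] range_enum by blast
qed

lemma (in Metric_space) mdiam_upper: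
  assumes "mbounded S" "a \<in> S" "b \<in> S"
  shows "d a b \<le> mdiam d S"
  unfolding mdiam_def
proof (rule cSup_upper)
  obtain B where "\<forall>u\<in>S. \<forall>v\<in>S. d u v \<le> B" using assms(1) unfolding mbounded_alt by blast
  then show "bdd_above {d a b |a b. a \<in> S \<and> b \<in> S}"
    unfolding bdd_above_def by blast
qed (use assms in blast)

lemma mdiam_le:
  assumes "S \<noteq> {}" "\<And>a b. a \<in> S \<Longrightarrow> b \<in> S \<Longrightarrow> rho a b \<le> c"
  shows "mdiam rho S \<le> c"
  unfolding mdiam_def
proof (rule cSup_least)
  show "{rho a b |a b. a \<in> S \<and> b \<in> S} \<noteq> {}" using assms(1) by blast
qed (use assms(2) in auto)

text \<open>Two points on the same track of a homotopy are no further apart than the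
  diameter of that track (the track is compact, hence bounded).\<close>

lemma (in Metric_space) homotopy_track_dist:
  assumes h: "continuous_map (prod_topology U (top_of_set {0..1})) mtopology h"
    and x: "x \<in> topspace U" and st: "s \<in> {0..1}" "t \<in> {0..1::real}"
  shows "d (h (x, s)) (h (x, t)) \<le> mdiam d (h ` ({x} \<times> {0..1}))"
proof (rule mdiam_upper)
  have "continuous_map (top_of_set {0..1::real}) (prod_topology U (top_of_set {0..1})) (Pair x)"
    using x by (auto simp: continuous_map_pairwise o_def)
  then have "continuous_map (top_of_set {0..1::real}) mtopology (h \<circ> Pair x)"
    using h by (rule continuous_map_compose)
  moreover have "compactin (top_of_set {0..1::real}) {0..1}"
    unfolding compactin_subtopology compactin_euclidean_iff by simp
  ultimately have "compactin mtopology ((h \<circ> Pair x) ` {0..1})"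
    by (intro image_compactin)
  moreover have "(h \<circ> Pair x) ` {0..1} = h ` ({x} \<times> {0..1})" by auto
  ultimately show "mbounded (h ` ({x} \<times> {0..1}))" by (simp add: compactin_imp_mbounded)
qed (use st in auto)

lemma (in Metric_space) limit_dist_le:
  assumes conv: "\<And>\<epsilon>. 0 < \<epsilon> \<Longrightarrow> \<forall>\<^sub>F n in sequentially. d (F n) l < \<epsilon>"
    and bound: "\<forall>\<^sub>F n in sequentially. d (F n) a \<le> c"
    and in_M: "\<And>n. F n \<in> M" "l \<in> M" "a \<in> M"
  shows "d l a \<le> c"
proof (rule field_le_epsilon)
  fix \<epsilon> :: real assume "0 < \<epsilon>"
  with conv bound have "\<forall>\<^sub>F n in sequentially. d (F n) l < \<epsilon> \<and> d (F n) a \<le> c"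
    by (simp add: eventually_conj)
  then obtain n where n: "d (F n) l < \<epsilon>" "d (F n) a \<le> c"
    using eventually_sequentially by auto
  have "d l a \<le> d l (F n) + d (F n) a" using triangle in_M by blast
  then show "d l a \<le> c + \<epsilon>" using n commute in_M by (smt (verit))
qed

lemma (in Metric_space) uniform_limit_with_modulus:
  assumes complete: "mcomplete"
    and cont: "\<And>n. continuous_map Z mtopology (F n)"
    and modulus: "\<And>m n p. m \<le> n \<Longrightarrow> p \<in> topspace Z \<Longrightarrow> d (F n p) (F m p) \<le> b m p"
    and small: "\<And>\<epsilon>. 0 < \<epsilon> \<Longrightarrow> \<exists>N. \<forall>m\<ge>N. \<forall>p\<in>topspace Z. b m p < \<epsilon>"
  obtains H where "continuous_map Z mtopology H"
    and "\<And>\<epsilon>. 0 < \<epsilon> \<Longrightarrow> \<forall>\<^sub>F n in sequentially. \<forall>p\<in>topspace Z. d (F n p) (H p) < \<epsilon>"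
    and "\<And>m p. p \<in> topspace Z \<Longrightarrow> d (H p) (F m p) \<le> b m p"
proof -
  have in_M: "F n p \<in> M" if "p \<in> topspace Z" for n p
    using cont[of n] that unfolding continuous_map_def by auto
  have Cauchy: "\<exists>N. \<forall>m n p. N \<le> m \<longrightarrow> N \<le> n \<longrightarrow> p \<in> topspace Z \<longrightarrow> d (F m p) (F n p) < \<epsilon>"
    if eps: "0 < \<epsilon>" for \<epsilon>
  proof -
    obtain N where N: "\<forall>m\<ge>N. \<forall>p\<in>topspace Z. b m p < \<epsilon>" using small[OF eps] by blast
    have "d (F m p) (F n p) < \<epsilon>" if "N \<le> m" "N \<le> n" "p \<in> topspace Z" for m n p
    proof (cases "m \<le> n")
      case True
      then have "d (F n p) (F m p) \<le> b m p" using modulus that by blast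
      moreover have "b m p < \<epsilon>" using N that by blast
      ultimately show ?thesis using commute[of "F m p" "F n p"] by linarith
    next
      case False
      then have "d (F m p) (F n p) \<le> b n p" using modulus that by simp
      moreover have "b n p < \<epsilon>" using N that by blast
      ultimately show ?thesis by linarith
    qed
    then show ?thesis by blast
  qed
  have "\<forall>\<^sub>F n in sequentially. continuous_map Z mtopology (F n)" using cont by simp
  then obtain H where H: "continuous_map Z mtopology H"
    and lim: "\<And>\<epsilon>. 0 < \<epsilon> \<Longrightarrow> \<forall>\<^sub>F n in sequentially. \<forall>p\<in>topspace Z. d (F n p) (H p) < \<epsilon>"
    using continuous_map_uniformly_Cauchy_limit[OF complete _ Cauchy] by blast
  have "d (H p) (F m p) \<le> b m p" if p: "p \<in> topspace Z" for m p
  proof (rule limit_dist_le)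
    show "\<forall>\<^sub>F n in sequentially. d (F n p) (F m p) \<le> b m p"
      using eventually_ge_at_top[of m] by eventually_elim (use modulus p in blast)
    show "\<forall>\<^sub>F n in sequentially. d (F n p) (H p) < \<epsilon>" if "0 < \<epsilon>" for \<epsilon>
      using lim[OF that] by eventually_elim (use p in auto)
  qed (use H p in_M in \<open>auto simp: continuous_map_def\<close>)
  then show thesis using that H lim by blast
qed

text \<open>Concatenation of countably many homotopies: the k-th one is run on the dyadic
  interval from t_k = 1 - 2^-k to t_(k+1), reparametrised affinely onto [0,1].\<close>

definition dyadic_time :: "nat \<Rightarrow> real" where
  "dyadic_time k = 1 - 1 / 2^k"

definition stage_param :: "nat \<Rightarrow> real \<Rightarrow> real" where
  "stage_param k t = max 0 (min 1 (2^Suc k * (t - dyadic_time k)))"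

primrec concat_stage :: "('a \<Rightarrow> 'b) \<Rightarrow> (nat \<Rightarrow> 'a \<times> real \<Rightarrow> 'b) \<Rightarrow> nat \<Rightarrow> 'a \<times> real \<Rightarrow> 'b"
where
  "concat_stage f0 h 0 = (\<lambda>p. f0 (fst p))"
| "concat_stage f0 h (Suc k) =
     (\<lambda>p. if snd p \<le> dyadic_time k then concat_stage f0 h k p
          else h k (fst p, stage_param k (snd p)))"

lemma dyadic_time_bounds:
  "dyadic_time 0 = 0" "0 \<le> dyadic_time k" "dyadic_time k \<le> 1"
  "dyadic_time k < dyadic_time (Suc k)"
  by (auto simp: dyadic_time_def divide_strict_left_mono)

lemma stage_param_range: "stage_param k t \<in> {0..1}"
  by (simp add: stage_param_def)

lemma stage_param_start: "stage_param k (dyadic_time k) = 0"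
  by (simp add: stage_param_def)

lemma stage_param_end:
  assumes "dyadic_time (Suc k) \<le> t"
  shows "stage_param k t = 1"
proof -
  have "2^Suc k * (dyadic_time (Suc k) - dyadic_time k) = (1::real)"
    by (simp add: dyadic_time_def field_simps)
  moreover have "2^Suc k * (dyadic_time (Suc k) - dyadic_time k) \<le> 2^Suc k * (t - dyadic_time k)"
    using assms by (intro mult_left_mono) auto
  ultimately show ?thesis by (simp add: stage_param_def)
qed

lemma continuous_map_stage_param:
  "continuous_map (prod_topology U (top_of_set {0..1})) (prod_topology U (top_of_set {0..1}))
     (\<lambda>p. (fst p, stage_param k (snd p)))"
proof -
  let ?Z = "prod_topology U (top_of_set {0..1::real})"
  have "continuous_map ?Z euclideanreal snd"
    using continuous_map_snd[of U "top_of_set {0..1::real}"]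
    by (rule continuous_map_into_fulltopology)
  then have "continuous_map ?Z euclideanreal (\<lambda>p. stage_param k (snd p))"
    unfolding stage_param_def by (intro continuous_intros)
  then have "continuous_map ?Z (top_of_set {0..1}) (\<lambda>p. stage_param k (snd p))"
    by (auto simp: continuous_map_in_subtopology intro: stage_param_range)
  then show ?thesis
    by (simp add: continuous_map_pairwise o_def continuous_map_fst)
qed

lemma concat_stage_continuous:
  fixes f :: "nat \<Rightarrow> 'a \<Rightarrow> 'b" and h :: "nat \<Rightarrow> 'a \<times> real \<Rightarrow> 'b"
  assumes f0: "continuous_map U T (f 0)"
    and h: "\<And>k. continuous_map (prod_topology U (top_of_set {0..1})) T (h k)"
    and ends: "\<And>k x. x \<in> topspace U \<Longrightarrow> h k (x, 0) = f k x \<and> h k (x, 1) = f (Suc k) x"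
  shows "continuous_map (prod_topology U (top_of_set {0..1})) T (concat_stage (f 0) h n)
    \<and> (\<forall>x\<in>topspace U. \<forall>t\<in>{0..1}. dyadic_time n \<le> t \<longrightarrow> concat_stage (f 0) h n (x, t) = f n x)"
proof (induction n)
  case 0
  have "continuous_map (prod_topology U (top_of_set {0..1::real})) T (f 0 \<circ> fst)"
    using continuous_map_fst f0 by (rule continuous_map_compose)
  then show ?case by (simp add: o_def)
next
  case (Suc n)
  let ?Z = "prod_topology U (top_of_set {0..1::real})"
  have "continuous_map ?Z T (concat_stage (f 0) h (Suc n))"
    unfolding concat_stage.simps
  proof (rule continuous_map_cases_le)
    show "continuous_map ?Z euclideanreal snd"
      using continuous_map_snd[of U "top_of_set {0..1::real}"]
      by (rule continuous_map_into_fulltopology)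
    show "continuous_map (subtopology ?Z {p \<in> topspace ?Z. snd p \<le> dyadic_time n}) T
            (concat_stage (f 0) h n)"
      using Suc.IH by (blast intro: continuous_map_from_subtopology)
    have "continuous_map ?Z T (h n \<circ> (\<lambda>p. (fst p, stage_param n (snd p))))"
      using continuous_map_stage_param h by (rule continuous_map_compose)
    then show "continuous_map (subtopology ?Z {p \<in> topspace ?Z. dyadic_time n \<le> snd p}) T
                 (\<lambda>p. h n (fst p, stage_param n (snd p)))"
      by (simp add: o_def continuous_map_from_subtopology)
  next
    fix p assume "p \<in> topspace ?Z" "snd p = dyadic_time n"
    then show "concat_stage (f 0) h n p = h n (fst p, stage_param n (snd p))"
      using Suc.IH ends[of "fst p" n] by (auto simp: stage_param_start dyadic_time_bounds)
  qed simp
  moreover have "concat_stage (f 0) h (Suc n) (x, t) = f (Suc n) x"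
    if "x \<in> topspace U" "t \<in> {0..1}" "dyadic_time (Suc n) \<le> t" for x t
    using that ends[of x n] dyadic_time_bounds(4)[of n] by (simp add: stage_param_end)
  ultimately show ?case by blast
qed

lemma (in Metric_space) concat_stage_step_dist:
  assumes h: "continuous_map (prod_topology U (top_of_set {0..1})) mtopology (h k)"
    and x: "x \<in> topspace U" and t: "t \<in> {0..1}"
    and stage_end: "dyadic_time k \<le> t \<Longrightarrow> concat_stage f0 h k (x, t) = h k (x, 0)"
    and in_M: "concat_stage f0 h k (x, t) \<in> M"
  shows "d (concat_stage f0 h (Suc k) (x, t)) (concat_stage f0 h k (x, t))
           \<le> mdiam d (h k ` ({x} \<times> {0..1}))"
proof (cases "t \<le> dyadic_time k")
  case True
  have "h k (x, 0) \<in> M" using h x by (auto simp: continuous_map_def)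
  then have "0 \<le> mdiam d (h k ` ({x} \<times> {0..1}))"
    using homotopy_track_dist[OF h x, of 0 0] by simp
  then show ?thesis using True in_M by simp
next
  case False
  have "d (h k (x, stage_param k t)) (h k (x, 0)) \<le> mdiam d (h k ` ({x} \<times> {0..1}))"
    by (rule homotopy_track_dist[OF h x stage_param_range]) simp
  then show ?thesis using False stage_end by simp
qed

lemma halving_uniformly_small:
  fixes e :: "nat \<Rightarrow> 'a \<Rightarrow> real"
  assumes e_half: "\<And>k x. x \<in> X \<Longrightarrow> e (Suc k) x \<le> e k x / 2"
    and e_le_1: "\<And>x. x \<in> X \<Longrightarrow> e 0 x \<le> 1"
    and eps: "0 < \<epsilon>"
  shows "\<exists>N. \<forall>m\<ge>N. \<forall>x\<in>X. e m x < \<epsilon>"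
proof -
  have geometric: "e k x \<le> (1/2)^k" if x: "x \<in> X" for k x
  proof (induction k)
    case 0
    then show ?case using e_le_1[OF x] by simp
  next
    case (Suc k)
    have "e (Suc k) x \<le> e k x / 2" by (rule e_half[OF x])
    also have "\<dots> \<le> (1/2)^k / 2" using Suc by (intro divide_right_mono) auto
    finally show ?case by simp
  qed
  obtain N where N: "(1/2::real)^N < \<epsilon>" using real_arch_pow_inv[of \<epsilon> "1/2"] eps by auto
  have "e m x < \<epsilon>" if "N \<le> m" "x \<in> X" for m x
  proof -
    have "(1/2::real)^m \<le> (1/2)^N" using that by (intro power_decreasing) auto
    then show ?thesis using geometric[OF \<open>x \<in> X\<close>, of m] N by linarith
  qed
  then show ?thesis by blast
qed

lemma (in Metric_space) halving_telescope:
  assumes in_M: "\<And>k. P k \<in> M"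
    and step: "\<And>k. d (P (Suc k)) (P k) \<le> c k"
    and c_half: "\<And>k. c (Suc k) \<le> c k / 2"
    and "m \<le> n"
  shows "d (P n) (P m) \<le> 2 * c m - 2 * c n"
  using \<open>m \<le> n\<close>
proof (induction n rule: dec_induct)
  case base
  then show ?case using in_M by simp
next
  case (step n)
  have "d (P (Suc n)) (P m) \<le> d (P (Suc n)) (P n) + d (P n) (P m)"
    using triangle in_M by blast
  then show ?case using step.IH assms(2)[of n] c_half[of n] by linarith
qed

lemma telescoping_homotopy:
  fixes f :: "nat \<Rightarrow> 'a \<Rightarrow> 'b" and e :: "nat \<Rightarrow> 'a \<Rightarrow> real"
  assumes MX: "Metric_space X d" and MM: "Metric_space M rho"
    and complete: "Metric_space.mcomplete M rho"
    and f0: "f 0 \<in> CXM X d M rho"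
    and hom: "\<And>k. eps_homotopic X d M rho (e k) (f k) (f (Suc k))"
    and e_pos: "\<And>k x. x \<in> X \<Longrightarrow> 0 < e k x"
    and e_half: "\<And>k x. x \<in> X \<Longrightarrow> e (Suc k) x \<le> e k x / 2"
    and e_le_1: "\<And>x. x \<in> X \<Longrightarrow> e 0 x \<le> 1"
  obtains H where
    "continuous_map (prod_topology (Metric_space.mtopology X d) (top_of_set {0..1}))
       (Metric_space.mtopology M rho) H"
    and "\<And>x. x \<in> X \<Longrightarrow> H (x, 0) = f 0 x"
    and "\<And>k x t. x \<in> X \<Longrightarrow> t \<in> {0..1} \<Longrightarrow> dyadic_time k \<le> t \<Longrightarrow> rho (H (x, t)) (f k x) \<le> 2 * e k x"
proof -
  interpret MX: Metric_space X d by fact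
  interpret MM: Metric_space M rho by fact
  let ?Z = "prod_topology MX.mtopology (top_of_set {0..1::real})"
  obtain h where h_cont: "\<And>k. continuous_map ?Z MM.mtopology (h k)"
    and h_ends: "\<And>k x. x \<in> X \<Longrightarrow> h k (x, 0) = f k x \<and> h k (x, 1) = f (Suc k) x"
    and h_diam: "\<And>k x. x \<in> X \<Longrightarrow> mdiam rho (h k ` ({x} \<times> {0..1})) < e k x"
    using hom unfolding eps_homotopic_def by metis
  define F where "F = concat_stage (f 0) h"
  have F_stage: "continuous_map ?Z MM.mtopology (F n)
      \<and> (\<forall>x\<in>X. \<forall>t\<in>{0..1}. dyadic_time n \<le> t \<longrightarrow> F n (x, t) = f n x)" for n
    unfolding F_def using concat_stage_continuous[where U=MX.mtopology and T=MM.mtopology] f0 h_cont h_ends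
    by (simp add: CXM_def)
  have F_in_M: "F n (x, t) \<in> M" if "x \<in> X" "t \<in> {0..1}" for n x t
    using F_stage[of n] that unfolding continuous_map_def by auto
  have F_step: "rho (F (Suc k) (x, t)) (F k (x, t)) \<le> e k x" if "x \<in> X" "t \<in> {0..1}" for k x t
  proof -
    have "rho (F (Suc k) (x, t)) (F k (x, t)) \<le> mdiam rho (h k ` ({x} \<times> {0..1}))"
      unfolding F_def
      by (rule MM.concat_stage_step_dist[OF h_cont])
        (use that F_stage[of k] h_ends[of x k] F_in_M in \<open>auto simp: F_def\<close>)
    then show ?thesis using h_diam[of x k] that by simp
  qed
  have modulus: "rho (F n p) (F m p) \<le> 2 * e m (fst p)" if "m \<le> n" "p \<in> topspace ?Z" for m n p
  proof -
    obtain x t where p: "p = (x, t)" "x \<in> X" "t \<in> {0..1}" using \<open>p \<in> topspace ?Z\<close> by auto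
    have "rho (F n p) (F m p) \<le> 2 * e m x - 2 * e n x"
      unfolding p(1)
      by (rule MM.halving_telescope[where P = "\<lambda>k. F k (x, t)"])
        (use F_in_M F_step e_half p \<open>m \<le> n\<close> in auto)
    then show ?thesis using e_pos[OF p(2), of n] p(1) by simp
  qed
  have small: "\<exists>N. \<forall>m\<ge>N. \<forall>p\<in>topspace ?Z. 2 * e m (fst p) < \<epsilon>" if "0 < \<epsilon>" for \<epsilon>
  proof -
    obtain N where "\<forall>m\<ge>N. \<forall>x\<in>X. e m x < \<epsilon> / 2"
      using halving_uniformly_small[where X = X and e = e and \<epsilon> = "\<epsilon> / 2", OF e_half e_le_1] \<open>0 < \<epsilon>\<close> by auto
    then have "\<forall>m\<ge>N. \<forall>p\<in>topspace ?Z. 2 * e m (fst p) < \<epsilon>" by fastforce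
    then show ?thesis by blast
  qed
  obtain H where H_cont: "continuous_map ?Z MM.mtopology H"
    and H_lim: "\<And>\<epsilon>. 0 < \<epsilon> \<Longrightarrow> \<forall>\<^sub>F n in sequentially. \<forall>p\<in>topspace ?Z. rho (F n p) (H p) < \<epsilon>"
    and H_dist: "\<And>m p. p \<in> topspace ?Z \<Longrightarrow> rho (H p) (F m p) \<le> 2 * e m (fst p)"
    by (rule MM.uniform_limit_with_modulus[OF complete, where Z = ?Z and F = F and b = "\<lambda>m p. 2 * e m (fst p)"])
      (use F_stage modulus small in auto)
  have H_start: "H (x, 0) = f 0 x" if x: "x \<in> X" for x
  proof -
    have F_start: "F n (x, 0) = f 0 x" for n
      using F_stage[of 0] x by (induction n) (auto simp: F_def dyadic_time_bounds)
    have f0_in_M: "f 0 x \<in> M" using F_in_M[OF x, of 0 0] F_start by simp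
    have "rho (H (x, 0)) (f 0 x) \<le> 0"
    proof (rule MM.limit_dist_le)
      show "\<forall>\<^sub>F n in sequentially. rho (F n (x, 0)) (H (x, 0)) < \<epsilon>" if "0 < \<epsilon>" for \<epsilon>
        using H_lim[OF that] by eventually_elim (use x in auto)
    qed (use F_start F_in_M x H_cont f0_in_M in \<open>auto simp: continuous_map_def\<close>)
    moreover have "H (x, 0) \<in> M" using H_cont x by (auto simp: continuous_map_def)
    ultimately show ?thesis using f0_in_M MM.nonneg[of "H (x, 0)" "f 0 x"] by simp
  qed
  have "rho (H (x, t)) (f k x) \<le> 2 * e k x"
    if "x \<in> X" "t \<in> {0..1}" "dyadic_time k \<le> t" for k x t
    using H_dist[of "(x, t)" k] F_stage[of k] that by simp
  with H_cont H_start show thesis using that by blast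
qed

definition admissible_step ::
  "'a set \<Rightarrow> ('a \<Rightarrow> 'a \<Rightarrow> real) \<Rightarrow> 'b set \<Rightarrow> ('b \<Rightarrow> 'b \<Rightarrow> real) \<Rightarrow> ('a \<Rightarrow> 'b) set
    \<Rightarrow> ('a \<Rightarrow> 'b) \<Rightarrow> ('a \<Rightarrow> real) \<Rightarrow> ('a \<Rightarrow> 'b) \<Rightarrow> ('a \<Rightarrow> real) \<Rightarrow> bool" where
  "admissible_step X d M rho V f e f' e' \<longleftrightarrow>
     f' \<in> V \<and> eps_homotopic X d M rho e f f' \<and> ctrl X d e' \<and> (\<forall>x\<in>X. e' x \<le> e x / 2)
     \<and> (\<forall>q\<in>CXM X d M rho. (\<forall>x\<in>X. rho (q x) (f' x) \<le> 2 * e' x) \<longrightarrow> q \<in> V)"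

text \<open>Homotopic density provides f', openness of V provides a neighbourhood of f'
  inside V, and e' is taken to be a third of its radius (capped at e/2).\<close>

lemma admissible_step_exists:
  assumes V_open: "sl_open X d M rho V" and V_dense: "homotopically_dense X d M rho V"
    and f: "f \<in> CXM X d M rho" and e: "ctrl X d e"
  shows "\<exists>f' e'. admissible_step X d M rho V f e f' e'"
proof -
  obtain f' where f': "f' \<in> V" "eps_homotopic X d M rho e f f'"
    using V_dense f e unfolding homotopically_dense_def by blast
  obtain \<delta> where \<delta>: "ctrl X d \<delta>" "slnbhd X d M rho f' \<delta> \<subseteq> V"
    using V_open f'(1) unfolding sl_open_def by blast
  define e' where "e' x = min (e x / 2) (\<delta> x / 3)" for x
  have "ctrl X d e'"
    using e \<delta>(1) unfolding ctrl_def e'_def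
    by (auto intro!: continuous_map_real_min continuous_intros simp: min_le_iff_disj)
  moreover have "q \<in> V" if "q \<in> CXM X d M rho" "\<forall>x\<in>X. rho (q x) (f' x) \<le> 2 * e' x" for q
  proof -
    have "rho (q x) (f' x) < \<delta> x" if "x \<in> X" for x
      using \<open>\<forall>x\<in>X. _\<close> \<delta>(1) that unfolding e'_def ctrl_def by fastforce
    then show ?thesis using \<delta>(2) \<open>q \<in> CXM X d M rho\<close> by (auto simp: slnbhd_def)
  qed
  ultimately have "admissible_step X d M rho V f e f' e'"
    using f' unfolding admissible_step_def e'_def by auto
  then show ?thesis by blast
qed

lemma admissible_sequence:
  assumes V_open: "\<And>k. sl_open X d M rho (V k)" and V_dense: "\<And>k. homotopically_dense X d M rho (V k)"
    and g: "g \<in> CXM X d M rho" and e0: "ctrl X d e0"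
  obtains f e where "f 0 = g" "e 0 = e0"
    and "\<And>k. admissible_step X d M rho (V k) (f k) (e k) (f (Suc k)) (e (Suc k))"
proof -
  have "\<forall>k f e. \<exists>p. f \<in> CXM X d M rho \<and> ctrl X d e
          \<longrightarrow> admissible_step X d M rho (V k) f e (fst p) (snd p)"
    using admissible_step_exists[OF V_open V_dense] by simp
  then obtain S where S: "\<And>k f e. f \<in> CXM X d M rho \<Longrightarrow> ctrl X d e
      \<Longrightarrow> admissible_step X d M rho (V k) f e (fst (S k f e)) (snd (S k f e))"
    by metis
  define fe where "fe = rec_nat (g, e0) (\<lambda>k p. S k (fst p) (snd p))"
  have fe_Suc: "fe (Suc k) = S k (fst (fe k)) (snd (fe k))" for k by (simp add: fe_def)
  have valid: "fst (fe k) \<in> CXM X d M rho \<and> ctrl X d (snd (fe k))" for k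
  proof (induction k)
    case 0
    then show ?case using g e0 by (simp add: fe_def)
  next
    case (Suc k)
    then have "admissible_step X d M rho (V k) (fst (fe k)) (snd (fe k)) (fst (fe (Suc k))) (snd (fe (Suc k)))"
      using S by (simp add: fe_Suc)
    then show ?case using V_open[of k] unfolding admissible_step_def sl_open_def by blast
  qed
  show thesis
  proof (rule that[of "\<lambda>k. fst (fe k)" "\<lambda>k. snd (fe k)"])
    show "admissible_step X d M rho (V k) (fst (fe k)) (snd (fe k)) (fst (fe (Suc k))) (snd (fe (Suc k)))" for k
      using S valid[of k] by (simp add: fe_Suc)
  qed (simp_all add: fe_def)
qed

lemma homotopy_slice_in_CXM:
  assumes "Metric_space X d"
    and H: "continuous_map (prod_topology (Metric_space.mtopology X d) (top_of_set {0..1::real}))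
              (Metric_space.mtopology M rho) H"
    and t: "t \<in> {0..1}"
  shows "restrict (\<lambda>x. H (x, t)) X \<in> CXM X d M rho"
proof -
  interpret MX: Metric_space X d by fact
  have "continuous_map MX.mtopology (prod_topology MX.mtopology (top_of_set {0..1})) (\<lambda>x. (x, t))"
    using t by (auto simp: continuous_map_pairwise o_def)
  then have "continuous_map MX.mtopology (Metric_space.mtopology M rho) (H \<circ> (\<lambda>x. (x, t)))"
    using H by (rule continuous_map_compose)
  then have "continuous_map MX.mtopology (Metric_space.mtopology M rho) (restrict (\<lambda>x. H (x, t)) X)"
    by (rule continuous_map_eq) simp
  then show ?thesis by (simp add: CXM_def)
qed

lemma eps_homotopic_if_tracks_near_start:
  assumes MX: "Metric_space X d" and MM: "Metric_space M rho"
    and H: "continuous_map (prod_topology (Metric_space.mtopology X d) (top_of_set {0..1::real}))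
              (Metric_space.mtopology M rho) H"
    and start: "\<And>x. x \<in> X \<Longrightarrow> H (x, 0) = g x"
    and near: "\<And>x t. x \<in> X \<Longrightarrow> t \<in> {0..1} \<Longrightarrow> rho (H (x, t)) (g x) \<le> r x"
    and r_small: "\<And>x. x \<in> X \<Longrightarrow> 2 * r x < eps x"
  shows "eps_homotopic X d M rho eps g (restrict (\<lambda>x. H (x, 1)) X)"
  unfolding eps_homotopic_def
proof (intro exI conjI ballI)
  interpret MX: Metric_space X d by fact
  interpret MM: Metric_space M rho by fact
  fix x assume x: "x \<in> X"
  have H_in_M: "H (x, t) \<in> M" if "t \<in> {0..1}" for t
    using H x that by (auto simp: continuous_map_def)
  have g_in_M: "g x \<in> M" using H_in_M[of 0] start[OF x] by simp
  have track_dist: "rho (H (x, s)) (H (x, t)) \<le> 2 * r x" if "s \<in> {0..1}" "t \<in> {0..1}" for s t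
  proof -
    have "rho (H (x, s)) (H (x, t)) \<le> rho (H (x, s)) (g x) + rho (g x) (H (x, t))"
      using MM.triangle H_in_M g_in_M that by blast
    then show ?thesis
      using near[OF x, of s] near[OF x, of t] MM.commute[of "g x" "H (x, t)"] that by linarith
  qed
  have "mdiam rho (H ` ({x} \<times> {0..1})) \<le> 2 * r x"
    by (rule mdiam_le) (use track_dist in auto)
  then show "mdiam rho (H ` ({x} \<times> {0..1})) < eps x" using r_small[OF x] by linarith
qed (use H start in auto)

lemma open_homotopically_dense_Inter:
  fixes V :: "nat \<Rightarrow> ('a \<Rightarrow> 'b) set"
  assumes MX: "Metric_space X d" and MM: "Metric_space M rho"
    and complete: "Metric_space.mcomplete M rho"
    and V_open: "\<And>k. sl_open X d M rho (V k)" and V_dense: "\<And>k. homotopically_dense X d M rho (V k)"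
  shows "homotopically_dense X d M rho (\<Inter>k. V k)"
  unfolding homotopically_dense_def
proof (intro ballI allI impI)
  fix g eps assume g: "g \<in> CXM X d M rho" and eps: "ctrl X d eps"
  interpret MX: Metric_space X d by fact
  interpret MM: Metric_space M rho by fact
  have e0_ctrl: "ctrl X d (\<lambda>x. eps x / 5)" using eps by (auto simp: ctrl_def intro!: continuous_intros)
  obtain f e where f0: "f 0 = g" and e0: "e 0 = (\<lambda>x. eps x / 5)"
    and steps: "\<And>k. admissible_step X d M rho (V k) (f k) (e k) (f (Suc k)) (e (Suc k))"
    using admissible_sequence[where V = V, OF V_open V_dense g e0_ctrl] by blast
  have e_ctrl: "ctrl X d (e k)" for k
  proof (cases k)
    case 0
    then show ?thesis using e0_ctrl by (simp add: e0)
  next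
    case (Suc j)
    then show ?thesis using steps[of j] by (simp add: admissible_step_def)
  qed
  have e_pos: "0 < e k x" and e_le_1: "e k x \<le> 1" if "x \<in> X" for k x
    using e_ctrl[of k] that by (auto simp: ctrl_def)
  obtain H where H_cont: "continuous_map (prod_topology MX.mtopology (top_of_set {0..1})) MM.mtopology H"
    and H_start: "\<And>x. x \<in> X \<Longrightarrow> H (x, 0) = g x"
    and H_near: "\<And>k x t. x \<in> X \<Longrightarrow> t \<in> {0..1} \<Longrightarrow> dyadic_time k \<le> t \<Longrightarrow> rho (H (x, t)) (f k x) \<le> 2 * e k x"
  proof (rule telescoping_homotopy[OF MX MM complete, of f e])
    show "e (Suc k) x \<le> e k x / 2" if "x \<in> X" for k x
      using steps[of k] that by (auto simp: admissible_step_def)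
  qed (use f0 g steps e_pos e_le_1 in \<open>auto simp: admissible_step_def\<close>)
  define g' where "g' = restrict (\<lambda>x. H (x, 1)) X"
  have g'_C: "g' \<in> CXM X d M rho"
    unfolding g'_def by (rule homotopy_slice_in_CXM[OF MX H_cont]) simp
  text \<open>g' is within 2 e_(k+1) of f_(k+1), hence in V_k by admissibility.\<close>
  have "g' \<in> V k" for k
  proof -
    have "rho (g' x) (f (Suc k) x) \<le> 2 * e (Suc k) x" if "x \<in> X" for x
      using H_near[of x 1 "Suc k"] that dyadic_time_bounds(3) by (simp add: g'_def)
    then show ?thesis using steps[of k] g'_C by (auto simp: admissible_step_def)
  qed
  text \<open>The tracks of H stay within 2 e_0 = 2 eps/5 of g.\<close>
  moreover have "eps_homotopic X d M rho eps g g'"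
    unfolding g'_def
  proof (rule eps_homotopic_if_tracks_near_start[OF MX MM H_cont H_start])
    show "rho (H (x, t)) (g x) \<le> 2 * (eps x / 5)" if "x \<in> X" "t \<in> {0..1}" for x t
      using H_near[OF that, of 0] that by (simp add: f0 e0 dyadic_time_bounds)
    show "2 * (2 * (eps x / 5)) < eps x" if "x \<in> X" for x
      using eps that by (auto simp: ctrl_def)
  qed
  ultimately show "\<exists>g'\<in>(\<Inter>k. V k). eps_homotopic X d M rho eps g g'" by auto
qed

theorem corollary2p6:
  fixes X :: "'a set" and d :: "'a \<Rightarrow> 'a \<Rightarrow> real"
    and M :: "'b set" and rho :: "'b \<Rightarrow> 'b \<Rightarrow> real"
    and G :: "nat \<Rightarrow> ('a \<Rightarrow> 'b) set"
  assumes "Metric_space X d"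
    and "Metric_space M rho" and "Metric_space.mcomplete M rho"
    and "\<And>i. gdelta_in (sl_topology X d M rho) (G i)"
    and "\<And>i. homotopically_dense X d M rho (G i)"
  shows "homotopically_dense X d M rho (\<Inter>i. G i)"
proof (rule gdelta_homotopically_dense_open_family[OF assms(4,5)])
  fix V :: "nat \<Rightarrow> ('a \<Rightarrow> 'b) set"
  assume V_open: "\<And>k. sl_open X d M rho (V k)"
    and V_dense: "\<And>k. homotopically_dense X d M rho (V k)"
    and V_sub: "(\<Inter>k. V k) \<subseteq> (\<Inter>i. G i)"
  have "homotopically_dense X d M rho (\<Inter>k. V k)"
    by (rule open_homotopically_dense_Inter[OF assms(1-3) V_open V_dense])
  then show ?thesis by (rule homotopically_dense_mono[OF V_sub])
qed

end
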